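(* Let $\psi^+$ be a rooted binary topological tree on $X$ and $\kappa\ge2$. For each internal vertex $v$ of $\psi^+$ fix two taxa $a,b$ with $v=\operatorname{MRCA}(a,b)$, and let $\mathcal S_v$ be the set of linear equations (in the entries of an indeterminate tensor $P$) expressing that every matrix slice of $P_{ab}$, obtained by fixing the indices of all taxa in $X\setminus\operatorname{desc}(v)$, is symmetric, where $P_{ab}$ denotes the marginalization of $P$ over all indices of taxa in $\operatorname{desc}(v)\setminus\{a,b\}$. For leaves $v$ set $\mathcal S_v=\emptyset$. Then the set $\mathcal S=\bigcup_{v}\mathcal S_v$ defines the linear space $L(\psi^+)$ (regardless of which pairs $a,b$ are chosen).
   Context: Consider real $|X|$-way $\kappa\times\cdots\times\kappa$ tensors $P$ with one index per taxon in $X$. For $Y\subseteq X$, $P_Y$ is the marginalization to $Y$; $\psi^+|_Y$ is the induced rooted subtree; a 2-clade is a pair of leaves that are exactly the leaf descendants of some vertex. $L(\psi^+)$ is the linear space of all real tensors $P$ such that for every $Y\subseteq X$ and every 2-clade $\{a,b\}$ of $\psi^+|_Y$, $P_Y$ is invariant under exchanging the $a$ and $b$ indices. $\operatorname{desc}(v)$ is the set of taxa (leaves) descended from $v$, and $\operatorname{MRCA}(a,b)$ is the most recent common ancestor of leaves $a,b$. *)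

theory Defs
  imports Complex_Main "HOL-Library.FuncSet"
begin

(* A rooted topological tree on the taxon set X is represented by its cluster system T:
   the vertex v is identified with desc(v), the set of taxa below it. *)

definition children :: "'a set set \<Rightarrow> 'a set \<Rightarrow> 'a set set" where
  "children T c = {d \<in> T. d \<subset> c \<and> \<not> (\<exists>e\<in>T. d \<subset> e \<and> e \<subset> c)}"

definition rooted_binary_tree :: "'a set \<Rightarrow> 'a set set \<Rightarrow> bool" where
  "rooted_binary_tree X T \<longleftrightarrow>
     finite X \<and> X \<noteq> {} \<and> X \<in> T \<and> (\<forall>x\<in>X. {x} \<in> T) \<and>
     (\<forall>c\<in>T. c \<noteq> {} \<and> c \<subseteq> X) \<and>
     (\<forall>c\<in>T. \<forall>d\<in>T. c \<subseteq> d \<or> d \<subseteq> c \<or> c \<inter> d = {}) \<and>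
     (\<forall>c\<in>T. 2 \<le> card c \<longrightarrow> card (children T c) = 2)"

definition internal :: "'a set set \<Rightarrow> 'a set \<Rightarrow> bool" where
  "internal T c \<longleftrightarrow> c \<in> T \<and> 2 \<le> card c"

definition is_mrca :: "'a set set \<Rightarrow> 'a set \<Rightarrow> 'a \<Rightarrow> 'a \<Rightarrow> bool" where
  "is_mrca T c a b \<longleftrightarrow> c \<in> T \<and> a \<in> c \<and> b \<in> c \<and> (\<forall>d\<in>T. a \<in> d \<and> b \<in> d \<longrightarrow> c \<subseteq> d)"

(* {a,b} is a 2-clade of the induced rooted subtree T|_Y: some vertex of T|_Y has leaf set {a,b};
   the leaf sets of vertices of T|_Y are exactly the nonempty sets c \<inter> Y, c \<in> T *)
definition two_clade :: "'a set set \<Rightarrow> 'a set \<Rightarrow> 'a \<Rightarrow> 'a \<Rightarrow> bool" where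
  "two_clade T Y a b \<longleftrightarrow> a \<noteq> b \<and> a \<in> Y \<and> b \<in> Y \<and> (\<exists>c\<in>T. c \<inter> Y = {a, b})"

abbreviation idx :: "'a set \<Rightarrow> nat \<Rightarrow> ('a \<Rightarrow> nat) set" where
  "idx Y k \<equiv> PiE Y (\<lambda>_. {..<k})"

definition marg :: "'a set \<Rightarrow> nat \<Rightarrow> 'a set \<Rightarrow> (('a \<Rightarrow> nat) \<Rightarrow> real) \<Rightarrow> ('a \<Rightarrow> nat) \<Rightarrow> real" where
  "marg X k Y P j = (\<Sum>i \<in> {i \<in> idx X k. \<forall>y\<in>Y. i y = j y}. P i)"

definition swap_invariant :: "'a set \<Rightarrow> nat \<Rightarrow> 'a set \<Rightarrow> 'a \<Rightarrow> 'a \<Rightarrow> (('a \<Rightarrow> nat) \<Rightarrow> real) \<Rightarrow> bool" where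
  "swap_invariant X k Y a b P \<longleftrightarrow>
     (\<forall>j \<in> idx Y k. marg X k Y P j = marg X k Y P (j(a := j b, b := j a)))"

definition Lspace :: "'a set \<Rightarrow> nat \<Rightarrow> 'a set set \<Rightarrow> (('a \<Rightarrow> nat) \<Rightarrow> real) set" where
  "Lspace X k T = {P. \<forall>Y. Y \<subseteq> X \<longrightarrow> (\<forall>a b. two_clade T Y a b \<longrightarrow> swap_invariant X k Y a b P)}"

(* P satisfies the equations S_v for internal vertex c with chosen pair a b:
   P_ab = P marginalized over desc(v) - {a,b}, i.e. P_{(X - c) \<union> {a,b}};
   every matrix slice (fixing indices l of taxa in X - c) is symmetric *)
definition satisfies_Sv :: "'a set \<Rightarrow> nat \<Rightarrow> 'a set \<Rightarrow> 'a \<Rightarrow> 'a \<Rightarrow> (('a \<Rightarrow> nat) \<Rightarrow> real) \<Rightarrow> bool" where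
  "satisfies_Sv X k c a b P \<longleftrightarrow>
     (\<forall>l \<in> idx (X - c) k. \<forall>s<k. \<forall>t<k.
        marg X k ((X - c) \<union> {a, b}) P (l(a := s, b := t)) =
        marg X k ((X - c) \<union> {a, b}) P (l(a := t, b := s)))"

definition Ssol :: "'a set \<Rightarrow> nat \<Rightarrow> 'a set set \<Rightarrow> ('a set \<Rightarrow> 'a \<times> 'a) \<Rightarrow> (('a \<Rightarrow> nat) \<Rightarrow> real) set" where
  "Ssol X k T ab = {P. \<forall>c. internal T c \<longrightarrow> satisfies_Sv X k c (fst (ab c)) (snd (ab c)) P}"

end

(*
  A tensor in L(psi+) is symmetric in every 2-clade of every induced subtree; the equations S_v
  ask for this only for the chosen pair {a, b} at v and Y = (X - desc v) \<union> {a, b}, which is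
  itself a 2-clade of the induced subtree. This gives L(psi+) \<subseteq> solutions of S.

  Conversely, call x and y exchangeable over W when P_(W \<union> {x}) turns into P_(W \<union> {y}) on
  renaming x to y. The equations S_v make the chosen pair at v exchangeable over every W disjoint
  from desc v, and induction down the tree extends this to any two taxa below v. If {a, b} is a
  2-clade of psi+|_Y with Y - {a, b} disjoint from c = MRCA(a, b), then a, b lie in different
  children of c, as do the chosen p, q; renaming a to p and b to q carries P_Y to the marginal on
  {p, q} \<union> (Y - {a, b}), which is symmetric in p, q by S_c.
*)
theory Submission
  imports Defs "HOL-Combinatorics.Transposition"
begin

section \<open>Marginals and transpositions of taxa\<close>

lemma marg_cong: "(\<And>y. y \<in> Y \<Longrightarrow> j y = j' y) \<Longrightarrow> marg X k Y P j = marg X k Y P j'"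
  unfolding marg_def by (rule sum.cong) auto

lemma marg_eq_0:
  assumes "y \<in> Y" "y \<in> X" "k \<le> j y"
  shows "marg X k Y P j = 0"
proof -
  have "{i \<in> idx X k. \<forall>y\<in>Y. i y = j y} = {}"
    using assms by (fastforce simp: PiE_iff)
  then show ?thesis
    unfolding marg_def by (simp only: sum.empty)
qed

lemma marg_marg:
  assumes "finite X" "Z \<subseteq> Y" "Y \<subseteq> X"
  shows "marg X k Z P j = (\<Sum>j'\<in>{j' \<in> idx Y k. \<forall>z\<in>Z. j' z = j z}. marg X k Y P j')"
proof -
  let ?S = "{i \<in> idx X k. \<forall>z\<in>Z. i z = j z}"
  let ?T = "{j' \<in> idx Y k. \<forall>z\<in>Z. j' z = j z}"
  have "finite Y"
    using assms finite_subset by blast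
  then have "finite ?S" "finite ?T"
    using assms(1) by (simp_all add: finite_PiE)
  moreover have "(\<lambda>i. restrict i Y) ` ?S \<subseteq> ?T"
    using assms(2,3) by (auto simp: PiE_iff)
  ultimately have "sum P ?S = (\<Sum>j'\<in>?T. sum P {i \<in> ?S. restrict i Y = j'})"
    by (rule sum.group[symmetric])
  also have "\<dots> = (\<Sum>j'\<in>?T. marg X k Y P j')"
  proof (rule sum.cong)
    fix j' assume j': "j' \<in> ?T"
    have "{i \<in> ?S. restrict i Y = j'} = {i \<in> idx X k. \<forall>y\<in>Y. i y = j' y}"
      using j' assms(2) by (auto simp: fun_eq_iff PiE_iff extensional_def)
    then show "sum P {i \<in> ?S. restrict i Y = j'} = marg X k Y P j'"
      unfolding marg_def by simp
  qed simp
  finally show ?thesis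
    unfolding marg_def .
qed

lemma marg_eq_marg_subset:
  assumes "finite X" "Z \<subseteq> Y" "Y \<subseteq> X" "marg X k Y P = marg X k Y Q"
  shows "marg X k Z P = marg X k Z Q"
  using assms by (simp add: fun_eq_iff marg_marg)

lemma marg_permute:
  assumes "x \<in> X" "y \<in> X"
  shows "marg X k Y (\<lambda>i. P (i \<circ> transpose x y)) j
       = marg X k (transpose x y ` Y) P (j \<circ> transpose x y)"
proof -
  have X: "transpose x y w \<in> X \<longleftrightarrow> w \<in> X" for w
    using assms by (auto simp: transpose_def)
  show ?thesis
    unfolding marg_def
    by (rule sum.reindex_bij_witness[where i = "\<lambda>i. i \<circ> transpose x y" and j = "\<lambda>i. i \<circ> transpose x y"])
      (auto simp: comp_assoc PiE_iff extensional_def X)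
qed

lemma fun_upd_swap_eq_comp_transpose: "j(a := j b, b := j a) = j \<circ> transpose a b"
  by (auto simp: fun_eq_iff transpose_def)

lemma swap_invariant_commute: "swap_invariant X k Y a b P \<longleftrightarrow> swap_invariant X k Y b a P"
  unfolding swap_invariant_def by (cases "a = b") (simp_all add: fun_upd_twist)

lemma swap_invariant_iff:
  assumes "a \<in> Y" "b \<in> Y" "Y \<subseteq> X"
  shows "swap_invariant X k Y a b P \<longleftrightarrow> (\<forall>j. marg X k Y P j = marg X k Y P (j \<circ> transpose a b))"
proof
  assume inv: "swap_invariant X k Y a b P"
  show "\<forall>j. marg X k Y P j = marg X k Y P (j \<circ> transpose a b)"
  proof
    fix j
    show "marg X k Y P j = marg X k Y P (j \<circ> transpose a b)"
    proof (cases "\<exists>y\<in>Y. k \<le> j y")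
      case True
      then obtain y where y: "y \<in> Y" "k \<le> j y" by blast
      have "transpose a b y \<in> Y" "y \<in> X" "transpose a b y \<in> X"
        using assms y(1) by (auto simp: transpose_def)
      then have "marg X k Y P j = 0" "marg X k Y P (j \<circ> transpose a b) = 0"
        using y by (auto intro: marg_eq_0)
      then show ?thesis
        by simp
    next
      case False
      then have j: "restrict j Y \<in> idx Y k"
        by (auto simp: not_le)
      have "marg X k Y P j = marg X k Y P (restrict j Y)"
        by (rule marg_cong) simp
      also have "\<dots> = marg X k Y P (restrict j Y \<circ> transpose a b)"
        using inv j unfolding swap_invariant_def fun_upd_swap_eq_comp_transpose by blast
      also have "\<dots> = marg X k Y P (j \<circ> transpose a b)"
        by (rule marg_cong) (use assms in \<open>auto simp: transpose_def\<close>)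
      finally show ?thesis .
    qed
  qed
qed (simp add: swap_invariant_def fun_upd_swap_eq_comp_transpose)

lemma swap_invariant_iff_marg_permute:
  assumes "a \<in> Y" "b \<in> Y" "Y \<subseteq> X"
  shows "swap_invariant X k Y a b P \<longleftrightarrow> marg X k Y P = marg X k Y (\<lambda>i. P (i \<circ> transpose a b))"
proof -
  have "marg X k Y (\<lambda>i. P (i \<circ> transpose a b)) j = marg X k Y P (j \<circ> transpose a b)" for j
    using assms marg_permute[of a X b k Y P j] by auto
  then show ?thesis
    using swap_invariant_iff[OF assms] by (simp add: fun_eq_iff)
qed

lemma swap_invariant_subset:
  assumes "finite X" "a \<in> Z" "b \<in> Z" "Z \<subseteq> Y" "Y \<subseteq> X" "swap_invariant X k Y a b P"
  shows "swap_invariant X k Z a b P"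
proof -
  have "a \<in> Y" "b \<in> Y" "Z \<subseteq> X"
    using assms(2-5) by auto
  then have "marg X k Y P = marg X k Y (\<lambda>i. P (i \<circ> transpose a b))"
    using assms(5,6) by (simp add: swap_invariant_iff_marg_permute)
  then have "marg X k Z P = marg X k Z (\<lambda>i. P (i \<circ> transpose a b))"
    by (rule marg_eq_marg_subset[OF assms(1,4,5)])
  then show ?thesis
    using assms(2,3) \<open>Z \<subseteq> X\<close> by (simp add: swap_invariant_iff_marg_permute)
qed

lemma satisfies_Sv_iff_swap_invariant:
  assumes "p \<in> c" "q \<in> c" "p \<noteq> q"
  shows "satisfies_Sv X k c p q P \<longleftrightarrow> swap_invariant X k ((X - c) \<union> {p, q}) p q P"
proof
  assume Sv: "satisfies_Sv X k c p q P"
  show "swap_invariant X k ((X - c) \<union> {p, q}) p q P"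
    unfolding swap_invariant_def
  proof
    fix j assume j: "j \<in> idx ((X - c) \<union> {p, q}) k"
    let ?l = "restrict j (X - c)"
    have j_eq: "?l(p := j p, q := j q) = j" "j(p := j q, q := j p) = ?l(p := j q, q := j p)"
      using j assms by (auto simp: fun_eq_iff PiE_iff extensional_def)
    have "?l \<in> idx (X - c) k" "j p < k" "j q < k"
      using j by auto
    then have "marg X k ((X - c) \<union> {p, q}) P (?l(p := j p, q := j q))
             = marg X k ((X - c) \<union> {p, q}) P (?l(p := j q, q := j p))"
      using Sv unfolding satisfies_Sv_def by blast
    then show "marg X k ((X - c) \<union> {p, q}) P j = marg X k ((X - c) \<union> {p, q}) P (j(p := j q, q := j p))"
      by (simp only: j_eq)
  qed
next
  assume inv: "swap_invariant X k ((X - c) \<union> {p, q}) p q P"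
  show "satisfies_Sv X k c p q P"
    unfolding satisfies_Sv_def
  proof (intro ballI allI impI)
    fix l s t assume "l \<in> idx (X - c) k" "s < k" "t < k"
    define j where "j = l(p := s, q := t)"
    have "j \<in> idx ((X - c) \<union> {p, q}) k"
      using \<open>l \<in> _\<close> \<open>s < k\<close> \<open>t < k\<close> assms unfolding j_def by (auto simp: PiE_iff extensional_def)
    with inv have "marg X k ((X - c) \<union> {p, q}) P j = marg X k ((X - c) \<union> {p, q}) P (j(p := j q, q := j p))"
      unfolding swap_invariant_def by blast
    also have "j(p := j q, q := j p) = l(p := t, q := s)"
      using assms(3) unfolding j_def by (auto simp: fun_eq_iff)
    finally show "marg X k ((X - c) \<union> {p, q}) P (l(p := s, q := t)) = marg X k ((X - c) \<union> {p, q}) P (l(p := t, q := s))"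
      unfolding j_def .
  qed
qed

section \<open>Exchangeable taxa\<close>

definition exchangeable :: "'a set \<Rightarrow> nat \<Rightarrow> 'a set \<Rightarrow> 'a \<Rightarrow> 'a \<Rightarrow> (('a \<Rightarrow> nat) \<Rightarrow> real) \<Rightarrow> bool" where
  "exchangeable X k W x y P \<longleftrightarrow>
     (\<forall>j. marg X k (insert x W) P j = marg X k (insert y W) P (j(y := j x)))"

lemma exchangeable_refl: "exchangeable X k W x x P"
  by (simp add: exchangeable_def)

lemma exchangeable_sym:
  assumes "exchangeable X k W x y P" "x \<notin> W"
  shows "exchangeable X k W y x P"
  unfolding exchangeable_def
proof
  fix j
  show "marg X k (insert y W) P j = marg X k (insert x W) P (j(x := j y))"
  proof (cases "x = y")
    case False
    have "marg X k (insert x W) P (j(x := j y)) = marg X k (insert y W) P (j(x := j y, y := (j(x := j y)) x))"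
      using assms(1) unfolding exchangeable_def by blast
    also have "\<dots> = marg X k (insert y W) P j"
      by (rule marg_cong) (use False assms(2) in auto)
    finally show ?thesis ..
  qed simp
qed

lemma exchangeable_trans:
  assumes "exchangeable X k W x y P" "exchangeable X k W y z P" "y \<notin> W"
  shows "exchangeable X k W x z P"
  unfolding exchangeable_def
proof
  fix j
  have "marg X k (insert x W) P j = marg X k (insert y W) P (j(y := j x))"
    using assms(1) unfolding exchangeable_def by blast
  also have "\<dots> = marg X k (insert z W) P (j(y := j x, z := (j(y := j x)) y))"
    using assms(2) unfolding exchangeable_def by blast
  also have "\<dots> = marg X k (insert z W) P (j(z := j x))"
    by (rule marg_cong) (use assms(3) in auto)
  finally show "marg X k (insert x W) P j = marg X k (insert z W) P (j(z := j x))" .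
qed

lemma exchangeable_if_swap_invariant:
  assumes "finite X" "insert x (insert y W) \<subseteq> Y" "Y \<subseteq> X" "x \<notin> W" "y \<notin> W"
    and "swap_invariant X k Y x y P"
  shows "exchangeable X k W x y P"
  unfolding exchangeable_def
proof
  fix j
  have Y: "x \<in> Y" "y \<in> Y" "insert x W \<subseteq> Y"
    using assms(2) by auto
  then have "marg X k Y P = marg X k Y (\<lambda>i. P (i \<circ> transpose x y))"
    using assms(6) swap_invariant_iff_marg_permute[OF Y(1,2) assms(3)] by simp
  then have "marg X k (insert x W) P = marg X k (insert x W) (\<lambda>i. P (i \<circ> transpose x y))"
    by (rule marg_eq_marg_subset[OF assms(1) Y(3) assms(3)])
  moreover have "x \<in> X" "y \<in> X"
    using Y(1,2) assms(3) by auto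
  ultimately have "marg X k (insert x W) P j = marg X k (transpose x y ` insert x W) P (j \<circ> transpose x y)"
    by (simp add: marg_permute)
  also have "transpose x y ` insert x W = insert y W"
    using assms(4,5) by simp
  also have "marg X k (insert y W) P (j \<circ> transpose x y) = marg X k (insert y W) P (j(y := j x))"
    by (rule marg_cong) (use assms(4,5) in \<open>auto simp: transpose_def\<close>)
  finally show "marg X k (insert x W) P j = marg X k (insert y W) P (j(y := j x))" .
qed

lemma swap_invariant_if_exchangeable:
  assumes "exchangeable X k (insert b Z) a p P" "exchangeable X k (insert p Z) b q P"
    and "swap_invariant X k (insert p (insert q Z)) p q P"
    and "insert a (insert b Z) \<subseteq> X" "insert p (insert q Z) \<subseteq> X"
    and "a \<noteq> b" "p \<noteq> q" "p \<noteq> b" "a \<notin> Z" "b \<notin> Z" "p \<notin> Z" "q \<notin> Z"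
  shows "swap_invariant X k (insert a (insert b Z)) a b P"
proof -
  let ?W = "insert p (insert q Z)"
  let ?J = "\<lambda>j. j(p := j a, q := j b)"
  have relabel: "marg X k (insert a (insert b Z)) P j = marg X k ?W P (?J j)" for j
  proof -
    have "marg X k (insert a (insert b Z)) P j = marg X k (insert b (insert p Z)) P (j(p := j a))"
      using assms(1) unfolding exchangeable_def by (simp add: insert_commute)
    also have "\<dots> = marg X k ?W P (?J j)"
      using assms(2,8) unfolding exchangeable_def by (simp add: insert_commute)
    finally show ?thesis .
  qed
  have "marg X k (insert a (insert b Z)) P j = marg X k (insert a (insert b Z)) P (j \<circ> transpose a b)" for j
  proof -
    have "marg X k (insert a (insert b Z)) P j = marg X k ?W P (?J j \<circ> transpose p q)"
      using relabel assms(3,5) swap_invariant_iff[of p ?W q X k P] by simp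
    also have "\<dots> = marg X k ?W P (?J (j \<circ> transpose a b))"
      by (rule marg_cong) (use assms(6-12) in \<open>auto simp: transpose_def\<close>)
    finally show ?thesis
      by (simp add: relabel)
  qed
  then show ?thesis
    using assms(4) swap_invariant_iff[of a "insert a (insert b Z)" b X k P] by simp
qed

section \<open>Clusters of a rooted binary tree\<close>

lemma rooted_binary_treeD:
  assumes "rooted_binary_tree X T"
  shows "finite X" "\<And>x. x \<in> X \<Longrightarrow> {x} \<in> T" "\<And>c. c \<in> T \<Longrightarrow> c \<subseteq> X"
    and "\<And>c d. c \<in> T \<Longrightarrow> d \<in> T \<Longrightarrow> c \<subseteq> d \<or> d \<subseteq> c \<or> c \<inter> d = {}"
    and "\<And>c. internal T c \<Longrightarrow> card (children T c) = 2"
  using assms unfolding rooted_binary_tree_def internal_def by blast+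

lemma rooted_binary_tree_finite:
  assumes "rooted_binary_tree X T"
  shows "finite T" "\<And>c. c \<in> T \<Longrightarrow> finite c"
proof -
  have "T \<subseteq> Pow X"
    using rooted_binary_treeD(3)[OF assms] by blast
  moreover have "finite (Pow X)"
    using rooted_binary_treeD(1)[OF assms] by simp
  ultimately show "finite T"
    by (rule finite_subset)
  show "finite c" if "c \<in> T" for c
    using rooted_binary_treeD(1,3)[OF assms] that finite_subset by blast
qed

lemma mrca_exists:
  assumes "rooted_binary_tree X T" "c \<in> T" "a \<in> c" "b \<in> c"
  obtains m where "is_mrca T m a b" "m \<subseteq> c"
proof -
  let ?A = "{d \<in> T. a \<in> d \<and> b \<in> d}"
  have "finite ?A"
    using rooted_binary_tree_finite(1)[OF assms(1)] by simp
  then obtain m where m: "m \<in> ?A" "m \<subseteq> c" and min: "\<forall>d\<in>?A. d \<subseteq> m \<longrightarrow> m = d"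
    using finite_has_minimal2[of ?A c] assms(2-4) by auto
  have "m \<subseteq> d" if "d \<in> ?A" for d
    using rooted_binary_treeD(4)[OF assms(1), of m d] m(1) min that by blast
  then have "is_mrca T m a b"
    using m(1) unfolding is_mrca_def by blast
  then show thesis
    using m(2) by (rule that)
qed

lemma mrca_internal_distinct:
  assumes "rooted_binary_tree X T" "is_mrca T c a b" "internal T c"
  shows "a \<noteq> b"
proof
  assume "a = b"
  have "{a} \<in> T"
    using assms(2) rooted_binary_treeD(2,3)[OF assms(1)] unfolding is_mrca_def by blast
  with \<open>a = b\<close> assms(2) have "c \<subseteq> {a}"
    unfolding is_mrca_def by blast
  then have "card c \<le> 1"
    using card_mono[of "{a}" c] by simp
  with assms(3) show False
    unfolding internal_def by simp
qed

lemma exists_child_containing: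
  assumes "rooted_binary_tree X T" "internal T c" "x \<in> c"
  shows "\<exists>e\<in>children T c. x \<in> e"
proof -
  let ?A = "{e \<in> T. x \<in> e \<and> e \<subset> c}"
  have "c \<noteq> {x}"
    using assms(2) unfolding internal_def by auto
  then have "{x} \<in> ?A"
    using assms rooted_binary_treeD(2,3)[OF assms(1)] unfolding internal_def by blast
  moreover have "finite ?A"
    using rooted_binary_tree_finite(1)[OF assms(1)] by simp
  ultimately obtain e where e: "e \<in> ?A" and max: "\<forall>f\<in>?A. e \<subseteq> f \<longrightarrow> e = f"
    using finite_has_maximal2[of ?A "{x}"] by auto
  have "e \<in> children T c"
    unfolding children_def using e max by auto
  with e show ?thesis
    by blast
qed

lemma children_disjoint:
  assumes "rooted_binary_tree X T" "e \<in> children T c" "f \<in> children T c" "e \<noteq> f"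
  shows "e \<inter> f = {}"
  using rooted_binary_treeD(4)[OF assms(1), of e f] assms(2-4) unfolding children_def by auto

lemma mrca_children_split:
  assumes "rooted_binary_tree X T" "internal T c" "is_mrca T c u v"
  obtains e1 e2 where "e1 \<in> T" "e2 \<in> T" "e1 \<subset> c" "e2 \<subset> c" "e1 \<inter> e2 = {}"
    and "u \<in> e1" "v \<in> e2" "c \<subseteq> e1 \<union> e2"
proof -
  have "u \<in> c" "v \<in> c"
    using assms(3) unfolding is_mrca_def by auto
  then obtain e1 e2 where ch: "e1 \<in> children T c" "e2 \<in> children T c" "u \<in> e1" "v \<in> e2"
    using exists_child_containing[OF assms(1,2)] by blast
  then have e: "e1 \<in> T" "e2 \<in> T" "e1 \<subset> c" "e2 \<subset> c"
    unfolding children_def by auto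
  have "e1 \<noteq> e2"
    using assms(3) ch(3,4) e unfolding is_mrca_def by blast
  obtain f1 f2 where "children T c = {f1, f2}"
    using rooted_binary_treeD(5)[OF assms(1,2)] card_2_iff by metis
  with ch(1,2) \<open>e1 \<noteq> e2\<close> have "children T c = {e1, e2}"
    by auto
  then have "c \<subseteq> e1 \<union> e2"
    using exists_child_containing[OF assms(1,2)] by blast
  moreover have "e1 \<inter> e2 = {}"
    by (rule children_disjoint[OF assms(1) ch(1,2) \<open>e1 \<noteq> e2\<close>])
  ultimately show thesis
    using that e ch(3,4) by blast
qed

lemma exchangeable_within_cluster:
  assumes tree: "rooted_binary_tree X T"
    and mrca: "\<forall>c. internal T c \<longrightarrow> is_mrca T c (fst (ab c)) (snd (ab c))"
    and P: "P \<in> Ssol X k T ab"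
    and "d \<in> T" "x \<in> d" "x' \<in> d" "W \<subseteq> X - d"
  shows "exchangeable X k W x x' P"
  using assms(4-7)
proof (induction "card d" arbitrary: d x x' rule: less_induct)
  case less
  have fin: "finite d"
    using rooted_binary_tree_finite(2)[OF tree less.prems(1)] .
  show ?case
  proof (cases "internal T d")
    case False
    then have "card d \<le> Suc 0"
      using less.prems(1) unfolding internal_def by simp
    then have "x = x'"
      using card_le_Suc0_iff_eq[OF fin] less.prems(2,3) by blast
    then show ?thesis
      by (simp add: exchangeable_refl)
  next
    case True
    define p q where "p = fst (ab d)" and "q = snd (ab d)"
    have m: "is_mrca T d p q"
      using mrca True unfolding p_def q_def by blast
    have pq: "p \<in> d" "q \<in> d" "p \<noteq> q"
      using m mrca_internal_distinct[OF tree m True] unfolding is_mrca_def by auto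
    have "p \<notin> W" "q \<notin> W" "x' \<notin> W"
      using less.prems(3,4) pq by auto
    have "satisfies_Sv X k d p q P"
      using P True unfolding Ssol_def p_def q_def by blast
    then have inv: "swap_invariant X k ((X - d) \<union> {p, q}) p q P"
      by (rule iffD1[OF satisfies_Sv_iff_swap_invariant[OF pq]])
    have "d \<subseteq> X"
      using rooted_binary_treeD(3)[OF tree less.prems(1)] .
    then have pq_exch: "exchangeable X k W p q P"
      using less.prems(4) pq
      by (intro exchangeable_if_swap_invariant[OF rooted_binary_treeD(1)[OF tree] _ _ _ _ inv]) auto
    obtain e1 e2 where e: "e1 \<in> T" "e2 \<in> T" "e1 \<subset> d" "e2 \<subset> d" "e1 \<inter> e2 = {}"
      "p \<in> e1" "q \<in> e2" "d \<subseteq> e1 \<union> e2"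
      by (rule mrca_children_split[OF tree True m])
    have card_e: "card e1 < card d" "card e2 < card d"
      using psubset_card_mono[OF fin] e(3,4) by auto
    have W_e: "W \<subseteq> X - e1" "W \<subseteq> X - e2"
      using less.prems(4) e(3,4) by auto
    have to_p: "exchangeable X k W y p P" if "y \<in> d" for y
    proof -
      have "y \<in> e1 \<or> y \<in> e2"
        using e(8) that by blast
      then show ?thesis
      proof
        assume "y \<in> e1"
        then show ?thesis
          by (rule less.hyps[OF card_e(1) e(1) _ e(6) W_e(1)])
      next
        assume "y \<in> e2"
        then have "exchangeable X k W y q P"
          by (rule less.hyps[OF card_e(2) e(2) _ e(7) W_e(2)])
        then show ?thesis
          using exchangeable_sym[OF pq_exch \<open>p \<notin> W\<close>] \<open>q \<notin> W\<close> by (rule exchangeable_trans)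
      qed
    qed
    show ?thesis
      using to_p[OF less.prems(2)] exchangeable_sym[OF to_p[OF less.prems(3)] \<open>x' \<notin> W\<close>] \<open>p \<notin> W\<close>
      by (rule exchangeable_trans)
  qed
qed

lemma swap_invariant_across_children:
  assumes tree: "rooted_binary_tree X T"
    and mrca: "\<forall>c. internal T c \<longrightarrow> is_mrca T c (fst (ab c)) (snd (ab c))"
    and P: "P \<in> Ssol X k T ab"
    and c: "internal T c"
    and e: "e1 \<in> T" "e2 \<in> T" "e1 \<subseteq> c" "e2 \<subseteq> c" "e1 \<inter> e2 = {}"
    and pq: "fst (ab c) \<in> e1" "snd (ab c) \<in> e2"
    and ab: "a \<in> e1" "b \<in> e2"
    and Z: "Z \<subseteq> X - c"
  shows "swap_invariant X k (insert a (insert b Z)) a b P"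
proof -
  define p q where "p = fst (ab c)" and "q = snd (ab c)"
  have p_q: "p \<in> e1" "q \<in> e2"
    using pq unfolding p_def q_def by auto
  have "c \<subseteq> X"
    using c rooted_binary_treeD(3)[OF tree] unfolding internal_def by blast
  have "p \<noteq> q" "a \<noteq> b" "p \<noteq> b" "p \<in> c" "q \<in> c"
    using e(3-5) p_q ab by auto
  have "satisfies_Sv X k c p q P"
    using P c unfolding Ssol_def p_def q_def by blast
  then have "swap_invariant X k ((X - c) \<union> {p, q}) p q P"
    by (rule iffD1[OF satisfies_Sv_iff_swap_invariant[OF \<open>p \<in> c\<close> \<open>q \<in> c\<close> \<open>p \<noteq> q\<close>]])
  then have inv: "swap_invariant X k (insert p (insert q Z)) p q P"
    by (rule swap_invariant_subset[OF rooted_binary_treeD(1)[OF tree], rotated -1])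
      (use Z \<open>c \<subseteq> X\<close> \<open>p \<in> c\<close> \<open>q \<in> c\<close> in auto)
  have "exchangeable X k (insert b Z) a p P"
    by (rule exchangeable_within_cluster[OF tree mrca P e(1) ab(1) p_q(1)])
      (use Z e(3-5) ab \<open>c \<subseteq> X\<close> in auto)
  moreover have "exchangeable X k (insert p Z) b q P"
    by (rule exchangeable_within_cluster[OF tree mrca P e(2) ab(2) p_q(2)])
      (use Z e(3-5) p_q \<open>c \<subseteq> X\<close> in auto)
  ultimately show ?thesis
    by (rule swap_invariant_if_exchangeable[OF _ _ inv])
      (use \<open>p \<noteq> q\<close> \<open>a \<noteq> b\<close> \<open>p \<noteq> b\<close> Z e(3,4) ab \<open>p \<in> c\<close> \<open>q \<in> c\<close> \<open>c \<subseteq> X\<close> in auto)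
qed

lemma Ssol_subset_Lspace:
  assumes tree: "rooted_binary_tree X T"
    and mrca: "\<forall>c. internal T c \<longrightarrow> is_mrca T c (fst (ab c)) (snd (ab c))"
  shows "Ssol X k T ab \<subseteq> Lspace X k T"
proof
  fix P assume P: "P \<in> Ssol X k T ab"
  have "swap_invariant X k Y a b P" if Y: "Y \<subseteq> X" and clade: "two_clade T Y a b" for Y a b
  proof -
    obtain c' where c': "c' \<in> T" "c' \<inter> Y = {a, b}" and "a \<noteq> b"
      using clade unfolding two_clade_def by blast
    then have "a \<in> c'" "b \<in> c'"
      by auto
    then obtain c where m: "is_mrca T c a b" and "c \<subseteq> c'"
      by (rule mrca_exists[OF tree c'(1)])
    then have "a \<in> c" "b \<in> c" "c \<in> T"
      unfolding is_mrca_def by auto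
    then have "card {a, b} \<le> card c"
      using rooted_binary_tree_finite(2)[OF tree] by (intro card_mono) auto
    with \<open>c \<in> T\<close> \<open>a \<noteq> b\<close> have int: "internal T c"
      unfolding internal_def by simp
    define Z where "Z = Y - {a, b}"
    have Z: "Z \<subseteq> X - c" and Y_eq: "Y = insert a (insert b Z)"
      using Y c' \<open>c \<subseteq> c'\<close> clade unfolding Z_def two_clade_def by auto
    have "is_mrca T c (fst (ab c)) (snd (ab c))"
      using mrca int by blast
    then obtain e1 e2 where e: "e1 \<in> T" "e2 \<in> T" "e1 \<subset> c" "e2 \<subset> c" "e1 \<inter> e2 = {}"
      "fst (ab c) \<in> e1" "snd (ab c) \<in> e2" "c \<subseteq> e1 \<union> e2"
      by (rule mrca_children_split[OF tree int])
    have sub: "e1 \<subseteq> c" "e2 \<subseteq> c"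
      using e(3,4) by auto
    have not_both: "\<not> (a \<in> e \<and> b \<in> e)" if "e \<in> T" "e \<subset> c" for e
      using m that unfolding is_mrca_def by blast
    consider "a \<in> e1" "b \<in> e2" | "b \<in> e1" "a \<in> e2"
      using \<open>a \<in> c\<close> \<open>b \<in> c\<close> e(8) not_both[OF e(1,3)] not_both[OF e(2,4)] by blast
    then show ?thesis
    proof cases
      case 1
      show ?thesis
        unfolding Y_eq by (rule swap_invariant_across_children[OF tree mrca P int e(1,2) sub e(5-7) 1 Z])
    next
      case 2
      have "swap_invariant X k (insert b (insert a Z)) b a P"
        by (rule swap_invariant_across_children[OF tree mrca P int e(1,2) sub e(5-7) 2 Z])
      moreover have "insert b (insert a Z) = Y"
        unfolding Y_eq by blast
      ultimately show ?thesis
        by (simp add: swap_invariant_commute)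
    qed
  qed
  then show "P \<in> Lspace X k T"
    unfolding Lspace_def by blast
qed

lemma Lspace_subset_Ssol:
  assumes tree: "rooted_binary_tree X T"
    and mrca: "\<forall>c. internal T c \<longrightarrow> is_mrca T c (fst (ab c)) (snd (ab c))"
  shows "Lspace X k T \<subseteq> Ssol X k T ab"
proof
  fix P assume P: "P \<in> Lspace X k T"
  have "satisfies_Sv X k c (fst (ab c)) (snd (ab c)) P" if c: "internal T c" for c
  proof -
    define p q where "p = fst (ab c)" and "q = snd (ab c)"
    have m: "is_mrca T c p q"
      using mrca c unfolding p_def q_def by blast
    then have pq: "p \<in> c" "q \<in> c" "p \<noteq> q"
      using mrca_internal_distinct[OF tree m c] unfolding is_mrca_def by auto
    have "c \<subseteq> X" "c \<in> T"
      using c rooted_binary_treeD(3)[OF tree] unfolding internal_def by auto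
    then have "(X - c) \<union> {p, q} \<subseteq> X" "two_clade T ((X - c) \<union> {p, q}) p q"
      using pq unfolding two_clade_def by auto
    then have "swap_invariant X k ((X - c) \<union> {p, q}) p q P"
      using P unfolding Lspace_def by blast
    then show ?thesis
      unfolding p_def [symmetric] q_def [symmetric] by (rule iffD2[OF satisfies_Sv_iff_swap_invariant[OF pq]])
  qed
  then show "P \<in> Ssol X k T ab"
    unfolding Ssol_def by blast
qed

theorem lemma4p2:
  fixes X :: "'a set" and T :: "'a set set" and \<kappa> :: nat
    and ab :: "'a set \<Rightarrow> 'a \<times> 'a"
  assumes "rooted_binary_tree X T"
    and "2 \<le> \<kappa>"
    and "\<forall>c. internal T c \<longrightarrow> is_mrca T c (fst (ab c)) (snd (ab c))"
  shows "Ssol X \<kappa> T ab = Lspace X \<kappa> T"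
  using Ssol_subset_Lspace[OF assms(1,3)] Lspace_subset_Ssol[OF assms(1,3)] by (rule equalityI)

end
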